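(* Consider the remote-estimation model described in the context, and let the sensor use the always-transmit policy ($A_t = 1$ for all $t\ge 1$). Then the resulting Markov chain $\{S_t\}_{t\geq 1}$ on the state space $\mathcal{S}$ is irreducible and positive recurrent. Moreover, for every pair of states $s, s'\in\mathcal{S}$, the expected first passage time from $s$ to $s'$ is finite.
   Context: Model. A source $\{X_t\}_{t\ge1}$ is a homogeneous discrete-time Markov chain on $\mathcal{X}=\{1,\dots,M\}$ with irreducible transition matrix $Q=(Q_{i,j})$, $Q_{i,j}=\Pr[X_{t+1}=j\mid X_t=i]$. Let $\mathcal{X}_{\rm ap}=\{i: Q_{i,i}>0\}$ and $\mathcal{X}_{\rm p}=\mathcal{X}\setminus\mathcal{X}_{\rm ap}$; it is assumed $\mathcal{X}_{\rm ap}\neq\emptyset$. At each time $t$ a sensor chooses $A_t\in\{0,1\}$ (1 = transmit). The channel is an i.i.d. Bernoulli process $H_t$ with $\Pr[H_t=1]=p_s$, $\Pr[H_t=0]=p_f=1-p_s$, independent of the source. The receiver's estimate evolves as $\hat X_{t+1}=X_t$ if $A_t=1$ and $H_t=1$, and $\hat X_{t+1}=\hat X_t$ otherwise. The Age of Consecutive Error (AoCE) is $\Delta_t=\Delta_{t-1}+1$ if $X_t\ne\hat X_t$ and $(X_t,\hat X_t)=(X_{t-1},\hat X_{t-1})$; $\Delta_t=1$ if $X_t\neq \hat X_t$ and $(X_t,\hat X_t)\ne(X_{t-1},\hat X_{t-1})$; $\Delta_t=0$ if $X_t=\hat X_t$. The system state is $S_t=(X_t,\hat X_t,\Delta_t)$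 with state space $\mathcal{S}=\{(i,i,0):i\in\mathcal{X}\}\cup\{(i,j,\delta): i\ne j, i\in\mathcal{X}_{\rm ap},\delta\ge1\}\cup\{(i,j,1): i\neq j, i\in\mathcal{X}_{\rm p}\}$. Transition probabilities $P_{s,s'}(a)=\Pr[S_{t+1}=s'\mid S_t=s,A_t=a]$: for $s=(i,j,\delta)$, $i\ne j$, under $a=0$: to $(i,j,\delta+1)$ w.p. $Q_{i,i}$, to $(j,j,0)$ w.p. $Q_{i,j}$, to $(k,j,1)$ w.p. $Q_{i,k}$ for $k\ne i,j$; under $a=1$: to $(i,i,0)$ w.p. $Q_{i,i}p_s$, to $(k,i,1)$ w.p. $Q_{i,k}p_s$ for $k\ne i$, to $(i,j,\delta+1)$ w.p. $Q_{i,i}p_f$, to $(j,j,0)$ w.p. $Q_{i,j}p_f$, to $(k,j,1)$ w.p. $Q_{i,k}p_f$ for $k\ne i,j$. For $s=(i,i,0)$ and either action: to $(i,i,0)$ w.p. $Q_{i,i}$ and to $(k,i,1)$ w.p. $Q_{i,k}$ for $k\ne i$. *)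

theory Defs
  imports "HOL-Analysis.Analysis"
begin

fun nstep :: "('a \<Rightarrow> 'a \<Rightarrow> real) \<Rightarrow> 'a set \<Rightarrow> nat \<Rightarrow> 'a \<Rightarrow> 'a \<Rightarrow> real" where
  "nstep P S 0 s s' = (if s = s' then 1 else 0)"
| "nstep P S (Suc n) s s' = (\<Sum>\<^sub>\<infinity>k\<in>S. P s k * nstep P S n k s')"

definition irreducible_on :: "('a \<Rightarrow> 'a \<Rightarrow> real) \<Rightarrow> 'a set \<Rightarrow> bool" where
  "irreducible_on P S \<longleftrightarrow> (\<forall>s\<in>S. \<forall>s'\<in>S. \<exists>n. nstep P S n s s' > 0)"

text \<open>first_passage P S n s s' = Pr[first visit to s' at time n (n \<ge> 1) | start in s]\<close>
fun first_passage :: "('a \<Rightarrow> 'a \<Rightarrow> real) \<Rightarrow> 'a set \<Rightarrow> nat \<Rightarrow> 'a \<Rightarrow> 'a \<Rightarrow> real" where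
  "first_passage P S 0 s s' = 0"
| "first_passage P S (Suc 0) s s' = P s s'"
| "first_passage P S (Suc (Suc n)) s s' =
     (\<Sum>\<^sub>\<infinity>k\<in>S - {s'}. P s k * first_passage P S (Suc n) k s')"

definition hitting_prob :: "('a \<Rightarrow> 'a \<Rightarrow> real) \<Rightarrow> 'a set \<Rightarrow> 'a \<Rightarrow> 'a \<Rightarrow> ennreal" where
  "hitting_prob P S s s' = (\<Sum>n. ennreal (first_passage P S n s s'))"

text \<open>Expected first passage time E[tau_{s'} | S_1 = s], tau_{s'} = min{n \<ge> 1 : visit s'}
  (infinite if tau is infinite with positive probability).\<close>
definition expected_passage_time :: "('a \<Rightarrow> 'a \<Rightarrow> real) \<Rightarrow> 'a set \<Rightarrow> 'a \<Rightarrow> 'a \<Rightarrow> ennreal" where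
  "expected_passage_time P S s s' =
     (\<Sum>n. ennreal (real n * first_passage P S n s s'))
     + (if hitting_prob P S s s' = 1 then 0 else top)"

definition positive_recurrent_state :: "('a \<Rightarrow> 'a \<Rightarrow> real) \<Rightarrow> 'a set \<Rightarrow> 'a \<Rightarrow> bool" where
  "positive_recurrent_state P S s \<longleftrightarrow>
     hitting_prob P S s s = 1 \<and> expected_passage_time P S s s < top"

definition positive_recurrent_on :: "('a \<Rightarrow> 'a \<Rightarrow> real) \<Rightarrow> 'a set \<Rightarrow> bool" where
  "positive_recurrent_on P S \<longleftrightarrow> (\<forall>s\<in>S. positive_recurrent_state P S s)"

definition src :: "nat \<Rightarrow> nat set" where "src M = {1..M}"

definition stochastic_on :: "(nat \<Rightarrow> nat \<Rightarrow> real) \<Rightarrow> nat set \<Rightarrow> bool" where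
  "stochastic_on Q X \<longleftrightarrow> (\<forall>i\<in>X. (\<forall>j\<in>X. Q i j \<ge> 0) \<and> (\<Sum>j\<in>X. Q i j) = 1)"

definition X_ap :: "nat \<Rightarrow> (nat \<Rightarrow> nat \<Rightarrow> real) \<Rightarrow> nat set" where
  "X_ap M Q = {i \<in> src M. Q i i > 0}"

definition X_p :: "nat \<Rightarrow> (nat \<Rightarrow> nat \<Rightarrow> real) \<Rightarrow> nat set" where
  "X_p M Q = src M - X_ap M Q"

text \<open>States (X_t, Xhat_t, Delta_t).\<close>
type_synonym state = "nat \<times> nat \<times> nat"

definition state_space :: "nat \<Rightarrow> (nat \<Rightarrow> nat \<Rightarrow> real) \<Rightarrow> state set" where
  "state_space M Q =
     {(i, i, 0) | i. i \<in> src M}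
   \<union> {(i, j, d) | i j d. i \<noteq> j \<and> i \<in> X_ap M Q \<and> j \<in> src M \<and> d \<ge> 1}
   \<union> {(i, j, 1) | i j. i \<noteq> j \<and> i \<in> X_p M Q \<and> j \<in> src M}"

text \<open>Transition probabilities P_{s,s'}(a); ps = success probability, pf = 1 - ps.\<close>
fun trans :: "(nat \<Rightarrow> nat \<Rightarrow> real) \<Rightarrow> real \<Rightarrow> nat \<Rightarrow> state \<Rightarrow> state \<Rightarrow> real" where
  "trans Q ps a (i, j, d) (i', j', d') =
     (if i = j then
        (if (i', j', d') = (i, i, 0) then Q i i else 0)
      + (if j' = i \<and> d' = 1 \<and> i' \<noteq> i then Q i i' else 0)
      else if a = 0 then
        (if (i', j', d') = (i, j, d + 1) then Q i i else 0)
      + (if (i', j', d') = (j, j, 0) then Q i j else 0)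
      + (if j' = j \<and> d' = 1 \<and> i' \<noteq> i \<and> i' \<noteq> j then Q i i' else 0)
      else
        (if (i', j', d') = (i, i, 0) then Q i i * ps else 0)
      + (if j' = i \<and> d' = 1 \<and> i' \<noteq> i then Q i i' * ps else 0)
      + (if (i', j', d') = (i, j, d + 1) then Q i i * (1 - ps) else 0)
      + (if (i', j', d') = (j, j, 0) then Q i j * (1 - ps) else 0)
      + (if j' = j \<and> d' = 1 \<and> i' \<noteq> i \<and> i' \<noteq> j then Q i i' * (1 - ps) else 0))"

abbreviation trans_always :: "(nat \<Rightarrow> nat \<Rightarrow> real) \<Rightarrow> real \<Rightarrow> state \<Rightarrow> state \<Rightarrow> real" where
  "trans_always Q ps \<equiv> trans Q ps 1"

end

(* Under the always-transmit policy every move of the state chain comes from one move i -> x of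
   the source together with one channel outcome, so all moves of positive probability that we
   use have probability at least delta = (min of the positive entries of Q) * min(p_s, p_f).
   Along such moves every state reaches every other one: a delivery resets the estimate, a loss
   lets the source wander with the estimate fixed or lets the age grow. Moreover, one delivery leads from any state into the finite set of states
   with age at most 1, so for a target t there are L and eps > 0 such that from every state t
   is visited within L steps with probability at least eps. Hence the probability of avoiding
   t for n steps decays geometrically, and the first-passage time to t is finite almost surely
   and has finite mean. *)

theory Submission
  imports Defs
begin

section \<open>Markov chains with finitely many successors per state\<close>

lemma hitting_prob_eq_1_if_expected_passage_time_finite:
  "expected_passage_time P S s t < top \<Longrightarrow> hitting_prob P S s t = 1"
  by (auto simp: expected_passage_time_def split: if_splits)

lemma nstep_nonneg:
  assumes "\<And>s k. s \<in> S \<Longrightarrow> k \<in> S \<Longrightarrow> 0 \<le> P s k"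
  shows "s \<in> S \<Longrightarrow> 0 \<le> nstep P S n s t"
  by (induction n arbitrary: s) (auto intro!: infsum_nonneg mult_nonneg_nonneg assms)

lemma nstep_pos_imp_rtrancl:
  assumes nonneg: "\<And>s k. s \<in> S \<Longrightarrow> k \<in> S \<Longrightarrow> 0 \<le> P s k"
  shows "s \<in> S \<Longrightarrow> 0 < nstep P S n s t \<Longrightarrow> (s, t) \<in> {(a, b). a \<in> S \<and> b \<in> S \<and> 0 < P a b}\<^sup>*"
proof (induction n arbitrary: s)
  case 0
  then show ?case by (simp split: if_splits)
next
  case (Suc n)
  obtain k where k: "k \<in> S" "P s k * nstep P S n k t \<noteq> 0"
    using Suc.prems(2) infsum_0[of S "\<lambda>k. P s k * nstep P S n k t"] by force
  then have "0 < P s k" "0 < nstep P S n k t"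
    using nonneg[OF Suc.prems(1) k(1)] nstep_nonneg[where P=P and S=S, OF nonneg k(1)]
    by (auto simp: less_le)
  then show ?case
    using Suc.IH[OF k(1)] Suc.prems(1) k(1) by (auto intro: converse_rtrancl_into_rtrancl)
qed

lemma summable_real_times_power:
  fixes \<rho> :: real
  assumes "0 < \<rho>" "\<rho> < 1"
  shows "summable (\<lambda>n. real n * \<rho> ^ n)"
proof -
  have "summable (\<lambda>n. diffs (\<lambda>_. 1::real) n * \<rho> ^ n)"
    by (rule termdiff_converges[of \<rho> 1]) (use assms in auto)
  then have "summable (\<lambda>n. real (Suc n) * \<rho> ^ n)"
    by (simp add: diffs_def)
  then show ?thesis
    by (rule summable_comparison_test'[of _ 0]) (use assms in auto)
qed

locale finite_branching_chain =
  fixes P :: "'a \<Rightarrow> 'a \<Rightarrow> real" and S :: "'a set"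
  assumes nonneg: "s \<in> S \<Longrightarrow> k \<in> S \<Longrightarrow> 0 \<le> P s k"
    and finite_successors: "s \<in> S \<Longrightarrow> finite {k \<in> S. P s k \<noteq> 0}"
    and row_sum: "s \<in> S \<Longrightarrow> (\<Sum>k | k \<in> S \<and> P s k \<noteq> 0. P s k) = 1"
begin

definition successors :: "'a \<Rightarrow> 'a set" where
  "successors s = {k \<in> S. P s k \<noteq> 0}"

lemma infsum_successors:
  assumes "s \<in> S" "A \<subseteq> S"
  shows "(\<Sum>\<^sub>\<infinity>k\<in>A. P s k * g k) = (\<Sum>k\<in>successors s \<inter> A. P s k * g k)"
proof -
  have "(\<Sum>\<^sub>\<infinity>k\<in>A. P s k * g k) = (\<Sum>\<^sub>\<infinity>k\<in>successors s \<inter> A. P s k * g k)"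
    by (rule infsum_cong_neutral) (use assms in \<open>auto simp: successors_def\<close>)
  then show ?thesis
    using finite_successors[OF assms(1)] by (simp add: successors_def)
qed

lemma sum_successors_remove:
  assumes "s \<in> S" "t \<in> S"
  shows "(\<Sum>k\<in>successors s - {t}. P s k) = 1 - P s t"
  using assms row_sum[OF assms(1)] finite_successors[OF assms(1)]
  by (cases "P s t = 0") (auto simp: successors_def sum_diff1)

lemma sum_successors_remove_le_1:
  assumes "s \<in> S"
  shows "(\<Sum>k\<in>successors s - {t}. P s k) \<le> 1"
proof -
  have "(\<Sum>k\<in>successors s - {t}. P s k) \<le> (\<Sum>k\<in>successors s. P s k)"
    using assms finite_successors nonneg by (auto simp: successors_def intro!: sum_mono2)
  then show ?thesis
    using row_sum[OF assms] by (simp add: successors_def)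
qed

lemma P_le_1:
  assumes "s \<in> S" "k \<in> S"
  shows "P s k \<le> 1"
  using sum_successors_remove[OF assms] sum_nonneg[of "successors s - {k}" "P s"] nonneg assms
  by (auto simp: successors_def)

definition transitions_ge :: "real \<Rightarrow> ('a \<times> 'a) set" where
  "transitions_ge \<delta> = {(s, k). s \<in> S \<and> k \<in> S \<and> \<delta> \<le> P s k}"

lemma transitions_ge_le_1: "(s, k) \<in> transitions_ge \<delta> \<Longrightarrow> \<delta> \<le> 1"
  using P_le_1 by (force simp: transitions_ge_def)

lemma transitions_ge_successors:
  "0 < \<delta> \<Longrightarrow> (s, k) \<in> transitions_ge \<delta> \<Longrightarrow> k \<in> successors s"
  by (auto simp: transitions_ge_def successors_def)

lemma nstep_pos_if_path:
  assumes "0 < \<delta>" "(s, t) \<in> transitions_ge \<delta> ^^ n" "s \<in> S"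
  shows "0 < nstep P S n s t"
  using assms(2,3)
proof (induction n arbitrary: s)
  case 0
  then show ?case by simp
next
  case (Suc n)
  obtain k where k: "(s, k) \<in> transitions_ge \<delta>" "(k, t) \<in> transitions_ge \<delta> ^^ n"
    using relpow_Suc_D2[OF Suc.prems(1)] by blast
  then have "k \<in> S" "0 < P s k"
    using assms(1) by (auto simp: transitions_ge_def)
  have "P s k * nstep P S n k t \<le> (\<Sum>k\<in>successors s \<inter> S. P s k * nstep P S n k t)"
    by (rule member_le_sum)
      (use k Suc.prems(2) assms(1) finite_successors nonneg nstep_nonneg[where P=P and S=S, OF nonneg]
        transitions_ge_successors in \<open>auto simp: successors_def\<close>)
  also have "\<dots> = nstep P S (Suc n) s t"
    using infsum_successors[OF Suc.prems(2), of S] by simp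
  finally show ?case
    using Suc.IH[OF k(2) \<open>k \<in> S\<close>] \<open>0 < P s k\<close> by (meson mult_pos_pos order_less_le_trans)
qed

text \<open>\<open>avoid_prob t n s\<close> is the probability that the chain started in \<open>s\<close> does not visit
  \<open>t\<close> at the times \<open>1, \<dots>, n\<close>; the starting time does not count.\<close>

fun avoid_prob :: "'a \<Rightarrow> nat \<Rightarrow> 'a \<Rightarrow> real" where
  "avoid_prob t 0 s = 1"
| "avoid_prob t (Suc n) s = (\<Sum>k\<in>successors s - {t}. P s k * avoid_prob t n k)"

declare avoid_prob.simps(2) [simp del]

lemma avoid_prob_bounds: "s \<in> S \<Longrightarrow> 0 \<le> avoid_prob t n s \<and> avoid_prob t n s \<le> 1"
proof (induction n arbitrary: s)
  case 0
  then show ?case by simp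
next
  case (Suc n)
  have "0 \<le> avoid_prob t (Suc n) s"
    using Suc nonneg by (auto simp: avoid_prob.simps successors_def intro!: sum_nonneg)
  moreover have "avoid_prob t (Suc n) s \<le> (\<Sum>k\<in>successors s - {t}. P s k)"
    using Suc nonneg by (auto simp: avoid_prob.simps successors_def intro!: sum_mono mult_left_le)
  ultimately show ?case
    using sum_successors_remove_le_1[OF Suc.prems, of t] by linarith
qed

lemma avoid_prob_add_le:
  assumes "\<And>k. k \<in> S \<Longrightarrow> avoid_prob t m k \<le> c"
  shows "s \<in> S \<Longrightarrow> avoid_prob t (n + m) s \<le> c * avoid_prob t n s"
proof (induction n arbitrary: s)
  case 0
  then show ?case using assms by simp
next
  case (Suc n)
  have "avoid_prob t (Suc n + m) s \<le> (\<Sum>k\<in>successors s - {t}. P s k * (c * avoid_prob t n k))"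
    using Suc nonneg by (auto simp: avoid_prob.simps successors_def intro!: sum_mono mult_left_mono)
  also have "\<dots> = c * avoid_prob t (Suc n) s"
    by (simp add: avoid_prob.simps sum_distrib_left mult_ac)
  finally show ?case .
qed

lemma avoid_prob_antimono:
  assumes "s \<in> S" "n \<le> m"
  shows "avoid_prob t m s \<le> avoid_prob t n s"
  using avoid_prob_add_le[of t "m - n" 1 s n] avoid_prob_bounds assms by simp

lemma avoid_prob_1: "s \<in> S \<Longrightarrow> t \<in> S \<Longrightarrow> avoid_prob t 1 s = 1 - P s t"
  using sum_successors_remove by (simp add: avoid_prob.simps)

lemma avoid_prob_Suc_le:
  assumes "s \<in> S" "k \<in> successors s" "k \<noteq> t"
  shows "avoid_prob t (Suc n) s \<le> 1 - P s k * (1 - avoid_prob t n k)"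
proof -
  let ?A = "successors s - {t}"
  have "P s k * (1 - avoid_prob t n k) \<le> (\<Sum>k\<in>?A. P s k * (1 - avoid_prob t n k))"
    by (rule member_le_sum)
      (use assms finite_successors nonneg avoid_prob_bounds in \<open>auto simp: successors_def\<close>)
  moreover have "(\<Sum>k\<in>?A. P s k) \<le> 1"
    using sum_successors_remove_le_1[OF assms(1)] .
  ultimately show ?thesis
    by (simp add: avoid_prob.simps algebra_simps sum_subtractf)
qed

lemma first_passage_Suc:
  assumes "t \<in> S"
  shows "s \<in> S \<Longrightarrow> first_passage P S (Suc n) s t = avoid_prob t n s - avoid_prob t (Suc n) s"
proof (induction n arbitrary: s)
  case 0
  then show ?case using avoid_prob_1[OF _ assms] by simp
next
  case (Suc n)
  have "successors s \<inter> (S - {t}) = successors s - {t}"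
    by (auto simp: successors_def)
  then have "first_passage P S (Suc (Suc n)) s t
      = (\<Sum>k\<in>successors s - {t}. P s k * first_passage P S (Suc n) k t)"
    using infsum_successors[OF Suc.prems, of "S - {t}"] by simp
  also have "\<dots> = (\<Sum>k\<in>successors s - {t}. P s k * avoid_prob t n k - P s k * avoid_prob t (Suc n) k)"
    using Suc.IH by (intro sum.cong) (auto simp: successors_def right_diff_distrib)
  also have "\<dots> = avoid_prob t (Suc n) s - avoid_prob t (Suc (Suc n)) s"
    by (simp only: avoid_prob.simps sum_subtractf)
  finally show ?case .
qed

lemma first_passage_nonneg: "t \<in> S \<Longrightarrow> s \<in> S \<Longrightarrow> 0 \<le> first_passage P S n s t"
  using first_passage_Suc avoid_prob_antimono[of s _ "Suc _" t]
  by (cases n) auto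

lemma avoid_prob_path_le:
  assumes "0 < \<delta>" "t \<in> S"
  shows "(s, t) \<in> transitions_ge \<delta> ^^ Suc m \<Longrightarrow> avoid_prob t (Suc m) s \<le> 1 - \<delta> ^ Suc m"
proof (induction m arbitrary: s)
  case 0
  then show ?case
    using avoid_prob_1[OF _ assms(2)] by (auto simp: transitions_ge_def)
next
  case (Suc m)
  obtain k where k: "(s, k) \<in> transitions_ge \<delta>" "(k, t) \<in> transitions_ge \<delta> ^^ Suc m"
    using relpow_Suc_D2[OF Suc.prems] by blast
  have s: "s \<in> S" and "\<delta> \<le> P s k" "\<delta> \<le> 1"
    using k(1) transitions_ge_le_1 by (auto simp: transitions_ge_def)
  have "\<delta> ^ Suc (Suc m) \<le> \<delta>"
    using power_decreasing[of 1 "Suc (Suc m)" \<delta>] assms(1) \<open>\<delta> \<le> 1\<close> by simp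
  show ?case
  proof (cases "k = t")
    case True
    have "avoid_prob t (Suc (Suc m)) s \<le> avoid_prob t 1 s"
      by (rule avoid_prob_antimono[OF s]) simp
    also have "\<dots> \<le> 1 - \<delta>"
      using avoid_prob_1[OF s assms(2)] True \<open>\<delta> \<le> P s k\<close> by simp
    finally show ?thesis
      using \<open>\<delta> ^ Suc (Suc m) \<le> \<delta>\<close> by linarith
  next
    case False
    have "\<delta> * \<delta> ^ Suc m \<le> P s k * (1 - avoid_prob t (Suc m) k)"
      using Suc.IH[OF k(2)] \<open>\<delta> \<le> P s k\<close> assms(1) by (intro mult_mono) auto
    then show ?thesis
      using avoid_prob_Suc_le[OF s transitions_ge_successors[OF assms(1) k(1)] False, of "Suc m"]
      by simp
  qed
qed

lemma avoid_prob_uniform_bound: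
  assumes "0 < \<delta>" "t \<in> S" "finite F"
    and F: "\<And>s. s \<in> S \<Longrightarrow> \<exists>f\<in>F. (s, f) \<in> transitions_ge \<delta> \<and> (f, t) \<in> (transitions_ge \<delta>)\<^sup>*"
  shows "\<exists>L>0. \<forall>s\<in>S. avoid_prob t L s \<le> 1 - \<delta> ^ L"
proof -
  have "\<forall>f. \<exists>n. (f, t) \<in> (transitions_ge \<delta>)\<^sup>* \<longrightarrow> (f, t) \<in> transitions_ge \<delta> ^^ n"
    by (meson rtrancl_power)
  then obtain len where len: "\<And>f. (f, t) \<in> (transitions_ge \<delta>)\<^sup>* \<Longrightarrow> (f, t) \<in> transitions_ge \<delta> ^^ len f"
    by metis
  define L where "L = Suc (Max (len ` F))"
  have "avoid_prob t L s \<le> 1 - \<delta> ^ L" if s: "s \<in> S" for s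
  proof -
    obtain f where f: "f \<in> F" "(s, f) \<in> transitions_ge \<delta>" "(f, t) \<in> (transitions_ge \<delta>)\<^sup>*"
      using F[OF s] by blast
    have "\<delta> \<le> 1"
      using transitions_ge_le_1[OF f(2)] .
    have le: "Suc (len f) \<le> L"
      using assms(3) f(1) by (simp add: L_def)
    have "avoid_prob t L s \<le> avoid_prob t (Suc (len f)) s"
      using avoid_prob_antimono[OF s le] .
    also have "\<dots> \<le> 1 - \<delta> ^ Suc (len f)"
      using avoid_prob_path_le[OF assms(1,2)] f(2) len[OF f(3)] by (meson relpow_Suc_I2)
    also have "\<dots> \<le> 1 - \<delta> ^ L"
      using power_decreasing[OF le, of \<delta>] assms(1) \<open>\<delta> \<le> 1\<close> by simp
    finally show ?thesis .
  qed
  moreover have "0 < L"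
    by (simp add: L_def)
  ultimately show ?thesis
    by blast
qed

lemma avoid_prob_geometric_bound:
  assumes "0 < L" "0 < r" "r < 1" and block: "\<And>s. s \<in> S \<Longrightarrow> avoid_prob t L s \<le> r"
  shows "\<exists>C \<rho>. 0 < \<rho> \<and> \<rho> < 1 \<and> (\<forall>s\<in>S. \<forall>n. avoid_prob t n s \<le> C * \<rho> ^ n)"
proof -
  have blocks: "avoid_prob t (q * L) s \<le> r ^ q" if "s \<in> S" for q s
    using that
  proof (induction q arbitrary: s)
    case 0
    then show ?case by simp
  next
    case (Suc q)
    have "avoid_prob t (q * L + L) s \<le> r * avoid_prob t (q * L) s"
      using avoid_prob_add_le[OF block Suc.prems] .
    also have "\<dots> \<le> r * r ^ q"
      using Suc assms(2) by (simp add: mult_left_mono)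
    finally show ?case
      by (simp add: add.commute)
  qed
  define \<rho> where "\<rho> = root L r"
  have \<rho>: "0 < \<rho>" "\<rho> < 1" "\<rho> ^ L = r"
    using assms by (auto simp: \<rho>_def real_root_gt_zero real_root_lt_1_iff real_root_pow_pos)
  have "avoid_prob t n s \<le> (1 / r) * \<rho> ^ n" if s: "s \<in> S" for s n
  proof -
    define q where "q = n div L"
    have "avoid_prob t n s \<le> avoid_prob t (q * L) s"
      by (rule avoid_prob_antimono[OF s]) (simp add: q_def)
    also have "\<dots> \<le> r ^ q"
      using blocks[OF s] .
    also have "r ^ q = r ^ Suc q / r"
      using assms(2) by simp
    also have "r ^ Suc q = \<rho> ^ (L * Suc q)"
      using \<rho>(3) by (simp only: power_mult)
    also have "\<rho> ^ (L * Suc q) \<le> \<rho> ^ n"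
      using \<rho> assms(1) by (intro power_decreasing) (auto simp: q_def dividend_less_times_div less_imp_le)
    finally show ?thesis
      using assms(2) by (simp add: divide_right_mono)
  qed
  then show ?thesis
    using \<rho> by blast
qed

lemma first_passage_sums_1:
  assumes "s \<in> S" "t \<in> S" "(\<lambda>n. avoid_prob t n s) \<longlonglongrightarrow> 0"
  shows "(\<lambda>n. first_passage P S n s t) sums 1"
proof -
  have "(\<lambda>m. \<Sum>n<m. first_passage P S (Suc n) s t) = (\<lambda>m. 1 - avoid_prob t m s)"
    using sum_lessThan_telescope'[of "\<lambda>n. avoid_prob t n s"]
    by (simp add: first_passage_Suc[OF assms(2,1)])
  moreover have "(\<lambda>m. 1 - avoid_prob t m s) \<longlonglongrightarrow> 1 - 0"
    by (intro tendsto_diff tendsto_const assms(3))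
  ultimately have "(\<lambda>n. first_passage P S (Suc n) s t) sums 1"
    unfolding sums_def by simp
  then show ?thesis
    using sums_Suc_iff[of "\<lambda>n. first_passage P S n s t" 1] by simp
qed

lemma hitting_prob_eq_1:
  assumes "s \<in> S" "t \<in> S" "(\<lambda>n. avoid_prob t n s) \<longlonglongrightarrow> 0"
  shows "hitting_prob P S s t = 1"
proof -
  have sums: "(\<lambda>n. first_passage P S n s t) sums 1"
    using first_passage_sums_1[OF assms] .
  have "(\<Sum>n. ennreal (first_passage P S n s t)) = ennreal (\<Sum>n. first_passage P S n s t)"
    using first_passage_nonneg[OF assms(2,1)] sums_summable[OF sums] by (intro suminf_ennreal2) auto
  then show ?thesis
    using sums_unique[OF sums] by (simp add: hitting_prob_def)
qed

lemma expected_passage_time_finite: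
  assumes s: "s \<in> S" and t: "t \<in> S" and "0 < \<rho>" "\<rho> < 1"
    and tail: "\<And>n. avoid_prob t n s \<le> C * \<rho> ^ n"
  shows "expected_passage_time P S s t < top"
proof -
  define f where "f n = first_passage P S n s t" for n
  have f_nonneg: "0 \<le> f n" for n
    using first_passage_nonneg[OF t s] by (simp add: f_def)
  have f_le: "f n \<le> (C / \<rho>) * \<rho> ^ n" for n
  proof (cases n)
    case 0
    then show ?thesis
      using tail[of 0] \<open>0 < \<rho>\<close> by (simp add: f_def)
  next
    case (Suc m)
    have "f n \<le> avoid_prob t m s"
      using first_passage_Suc[OF t s, of m] avoid_prob_bounds[OF s, of t "Suc m"] Suc
      by (simp add: f_def)
    also have "\<dots> \<le> (C / \<rho>) * \<rho> ^ n"
      using tail[of m] Suc \<open>0 < \<rho>\<close> by simp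
    finally show ?thesis .
  qed
  have "(\<lambda>n. avoid_prob t n s) \<longlonglongrightarrow> 0"
  proof (rule tendsto_sandwich[of "\<lambda>_. 0" _ _ "\<lambda>n. C * \<rho> ^ n"])
    show "\<forall>\<^sub>F n in sequentially. 0 \<le> avoid_prob t n s"
      using avoid_prob_bounds[OF s] by simp
    show "\<forall>\<^sub>F n in sequentially. avoid_prob t n s \<le> C * \<rho> ^ n"
      using tail by simp
    show "(\<lambda>n. C * \<rho> ^ n) \<longlonglongrightarrow> 0"
      using assms(3,4) by (intro tendsto_mult_right_zero LIMSEQ_power_zero) auto
  qed simp
  then have hit: "hitting_prob P S s t = 1"
    using hitting_prob_eq_1[OF s t] by blast
  have "summable (\<lambda>n. (C / \<rho>) * (real n * \<rho> ^ n))"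
    using summable_real_times_power[OF assms(3,4)] by (rule summable_mult)
  then have "summable (\<lambda>n. real n * f n)"
  proof (rule summable_comparison_test'[of _ 0])
    fix n
    show "norm (real n * f n) \<le> C / \<rho> * (real n * \<rho> ^ n)"
      using mult_left_mono[OF f_le[of n], of "real n"] f_nonneg[of n] by (simp add: mult_ac)
  qed
  then have "(\<Sum>n. ennreal (real n * f n)) = ennreal (\<Sum>n. real n * f n)"
    using f_nonneg by (intro suminf_ennreal2) auto
  then show ?thesis
    using hit by (simp add: expected_passage_time_def f_def[symmetric])
qed

theorem irreducible_and_finite_expected_passage_times:
  assumes "0 < \<delta>"
    and connected: "\<And>s t. s \<in> S \<Longrightarrow> t \<in> S \<Longrightarrow> (s, t) \<in> (transitions_ge \<delta>)\<^sup>*"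
    and "finite F" and into_F: "\<And>s. s \<in> S \<Longrightarrow> \<exists>f\<in>F. (s, f) \<in> transitions_ge \<delta>"
  shows "irreducible_on P S \<and> (\<forall>s\<in>S. \<forall>t\<in>S. expected_passage_time P S s t < top)"
proof (intro conjI ballI)
  show "irreducible_on P S"
    unfolding irreducible_on_def
    using connected nstep_pos_if_path[OF assms(1)] by (meson rtrancl_power)
next
  fix s t assume s: "s \<in> S" and t: "t \<in> S"
  have "\<exists>f\<in>F. (s', f) \<in> transitions_ge \<delta> \<and> (f, t) \<in> (transitions_ge \<delta>)\<^sup>*" if "s' \<in> S" for s'
    using into_F[OF that] connected[OF _ t] by (auto simp: transitions_ge_def)
  then obtain L where "0 < L" and L: "\<And>s. s \<in> S \<Longrightarrow> avoid_prob t L s \<le> 1 - \<delta> ^ L"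
    using avoid_prob_uniform_bound[OF assms(1) t assms(3)] by blast
  \<comment> \<open>The \<open>max\<close> keeps \<open>r\<close> positive when \<open>\<delta> = 1\<close>.\<close>
  define r where "r = max (1 - \<delta> ^ L) (1 / 2)"
  have "0 < r" "r < 1"
    using assms(1) by (auto simp: r_def)
  moreover have "avoid_prob t L s' \<le> r" if "s' \<in> S" for s'
    using L[OF that] by (simp add: r_def)
  ultimately obtain C \<rho> where "0 < \<rho>" "\<rho> < 1" "\<And>n. avoid_prob t n s \<le> C * \<rho> ^ n"
    using avoid_prob_geometric_bound[OF \<open>0 < L\<close>] s by metis
  then show "expected_passage_time P S s t < top"
    using expected_passage_time_finite[OF s t] by blast
qed

end

section \<open>The remote-estimation chain under the always-transmit policy\<close>

text \<open>From a state with source \<open>i\<close>, estimate \<open>j\<close> and age \<open>d\<close>, when the source moves to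
  \<open>x\<close> the next state is \<open>next_delivered i x\<close> if the transmission succeeds and
  \<open>next_lost i j d x\<close> if it fails; \<open>update_prob ps s x\<close> is the conditional law of the
  next state given that the source moves to \<open>x\<close>.\<close>

definition next_delivered :: "nat \<Rightarrow> nat \<Rightarrow> state" where
  "next_delivered i x = (if x = i then (i, i, 0) else (x, i, 1))"

definition next_lost :: "nat \<Rightarrow> nat \<Rightarrow> nat \<Rightarrow> nat \<Rightarrow> state" where
  "next_lost i j d x = (if x = i then (i, j, Suc d) else if x = j then (j, j, 0) else (x, j, 1))"

definition update_prob :: "real \<Rightarrow> state \<Rightarrow> nat \<Rightarrow> state \<Rightarrow> real" where
  "update_prob ps s x k = (case s of (i, j, d) \<Rightarrow>
     if i = j then (if k = next_delivered i x then 1 else 0)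
     else (if k = next_delivered i x then ps else 0) + (if k = next_lost i j d x then 1 - ps else 0))"

lemma fst_next_delivered [simp]: "fst (next_delivered i x) = x"
  by (simp add: next_delivered_def)

lemma fst_next_lost [simp]: "fst (next_lost i j d x) = x"
  by (simp add: next_lost_def)

text \<open>The simplifier rewrites the action \<open>1\<close> of \<open>trans_always\<close> to \<open>Suc 0\<close>, so this
  factorisation is applied by unfolding before simplification.\<close>

lemma trans_always_factor: "trans_always Q ps s k = Q (fst s) (fst k) * update_prob ps s (fst k) k"
proof -
  obtain i j d a b c where "s = (i, j, d)" "k = (a, b, c)"
    by (cases s, cases k) auto
  then show ?thesis
    by (cases "i = j"; cases "a = i"; cases "a = j")
      (simp_all add: update_prob_def next_delivered_def next_lost_def distrib_left)
qed

lemma update_prob_nonneg: "0 < ps \<Longrightarrow> ps < 1 \<Longrightarrow> 0 \<le> update_prob ps s x k"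
  by (cases s) (auto simp: update_prob_def)

lemma update_prob_eq_0: "x \<noteq> fst k \<Longrightarrow> update_prob ps s x k = 0"
  by (cases s) (auto simp: update_prob_def)

lemma finite_src [simp]: "finite (src M)"
  by (simp add: src_def)

locale remote_estimation =
  fixes M :: nat and Q :: "nat \<Rightarrow> nat \<Rightarrow> real" and ps :: real
  assumes M_pos: "1 \<le> M"
    and stochastic: "stochastic_on Q (src M)"
    and irreducible: "irreducible_on Q (src M)"
    and ps_pos: "0 < ps" and ps_less_1: "ps < 1"
begin

abbreviation S :: "state set" where
  "S \<equiv> state_space M Q"

abbreviation P :: "state \<Rightarrow> state \<Rightarrow> real" where
  "P \<equiv> trans_always Q ps"

lemma Q_nonneg: "i \<in> src M \<Longrightarrow> j \<in> src M \<Longrightarrow> 0 \<le> Q i j"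
  using stochastic by (simp add: stochastic_on_def)

lemma Q_row_sum: "i \<in> src M \<Longrightarrow> (\<Sum>j\<in>src M. Q i j) = 1"
  using stochastic by (simp add: stochastic_on_def)

lemma Q_row_pos: "i \<in> src M \<Longrightarrow> \<exists>x\<in>src M. 0 < Q i x"
  using Q_row_sum sum_nonpos[of "src M" "Q i"] by (force simp: not_less)

lemma synced_in_state_space [simp]: "(i, i, d) \<in> S \<longleftrightarrow> i \<in> src M \<and> d = 0"
  by (auto simp: state_space_def X_ap_def X_p_def)

lemma unsynced_in_state_space:
  "i \<noteq> j \<Longrightarrow> (i, j, d) \<in> S \<longleftrightarrow> i \<in> src M \<and> j \<in> src M \<and> 1 \<le> d \<and> (0 < Q i i \<or> d = 1)"
  by (auto simp: state_space_def X_ap_def X_p_def)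

lemma state_space_src: "s \<in> S \<Longrightarrow> fst s \<in> src M \<and> fst (snd s) \<in> src M"
  by (auto simp: state_space_def X_ap_def X_p_def)

lemma next_delivered_in_state_space: "i \<in> src M \<Longrightarrow> x \<in> src M \<Longrightarrow> next_delivered i x \<in> S"
  by (auto simp: next_delivered_def unsynced_in_state_space)

lemma next_lost_in_state_space:
  "(i, j, d) \<in> S \<Longrightarrow> i \<noteq> j \<Longrightarrow> x \<in> src M \<Longrightarrow> 0 < Q i x \<Longrightarrow> next_lost i j d x \<in> S"
  by (auto simp: next_lost_def unsynced_in_state_space)

definition candidates :: "state \<Rightarrow> state set" where
  "candidates s = (case s of (i, j, d) \<Rightarrow> next_delivered i ` src M \<union> next_lost i j d ` src M)"

lemma finite_candidates: "finite (candidates s)"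
  by (cases s) (simp add: candidates_def)

lemma trans_always_eq_0:
  assumes "k \<in> S" "k \<notin> candidates s"
  shows "P s k = 0"
proof -
  obtain i j d where s: "s = (i, j, d)"
    by (cases s) auto
  have "fst k \<in> src M"
    using assms(1) state_space_src by blast
  then have "k \<noteq> next_delivered i (fst k)" "k \<noteq> next_lost i j d (fst k)"
    using assms(2) by (auto simp: candidates_def s)
  then show ?thesis
    unfolding trans_always_factor by (auto simp: update_prob_def s)
qed

lemma sum_update_prob:
  assumes "(i, j, d) \<in> S" "x \<in> src M" "0 < Q i x"
  shows "(\<Sum>k\<in>S \<inter> candidates (i, j, d). update_prob ps (i, j, d) x k) = 1"
proof -
  have fin: "finite (S \<inter> candidates (i, j, d))"
    using finite_candidates by blast
  have delivered: "next_delivered i x \<in> S \<inter> candidates (i, j, d)"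
    using assms state_space_src[OF assms(1)] next_delivered_in_state_space
    by (auto simp: candidates_def)
  show ?thesis
  proof (cases "i = j")
    case True
    then show ?thesis
      using fin delivered by (simp add: update_prob_def)
  next
    case False
    then have "next_lost i j d x \<in> S \<inter> candidates (i, j, d)"
      using assms next_lost_in_state_space by (auto simp: candidates_def)
    then show ?thesis
      using False fin delivered by (simp add: update_prob_def sum.distrib)
  qed
qed

lemma trans_always_row_sum:
  assumes "s \<in> S"
  shows "(\<Sum>k\<in>S \<inter> candidates s. P s k) = 1"
proof -
  obtain i j d where s: "s = (i, j, d)"
    by (cases s) auto
  have i: "i \<in> src M"
    using state_space_src[OF assms] s by simp
  have "P s k = (\<Sum>x\<in>src M. Q i x * update_prob ps s x k)" if "k \<in> S" for k
  proof -
    have "fst k \<in> src M"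
      using that state_space_src by blast
    then show ?thesis
      unfolding trans_always_factor
      using s by (simp add: update_prob_eq_0 sum.remove[of "src M" "fst k"])
  qed
  then have "(\<Sum>k\<in>S \<inter> candidates s. P s k)
      = (\<Sum>x\<in>src M. Q i x * (\<Sum>k\<in>S \<inter> candidates s. update_prob ps s x k))"
    by (simp add: sum.swap[of _ "src M"] sum_distrib_left)
  also have "\<dots> = (\<Sum>x\<in>src M. Q i x)"
  proof (rule sum.cong)
    fix x assume x: "x \<in> src M"
    show "Q i x * (\<Sum>k\<in>S \<inter> candidates s. update_prob ps s x k) = Q i x"
      using sum_update_prob[of i j d x] assms s x Q_nonneg[OF i x] by (cases "Q i x = 0") auto
  qed simp
  finally show ?thesis
    using Q_row_sum[OF i] by simp
qed

sublocale finite_branching_chain P S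
proof
  fix s k assume "s \<in> S" "k \<in> S"
  then show "0 \<le> P s k"
    unfolding trans_always_factor
    using state_space_src Q_nonneg update_prob_nonneg[OF ps_pos ps_less_1] by simp
next
  fix s assume s: "s \<in> S"
  have sub: "{k \<in> S. P s k \<noteq> 0} \<subseteq> S \<inter> candidates s"
    using trans_always_eq_0 by blast
  then show "finite {k \<in> S. P s k \<noteq> 0}"
    using finite_candidates by (blast intro: finite_subset)
  have "(\<Sum>k\<in>{k \<in> S. P s k \<noteq> 0}. P s k) = (\<Sum>k\<in>S \<inter> candidates s. P s k)"
    using sub finite_candidates by (intro sum.mono_neutral_left) auto
  then show "(\<Sum>k | k \<in> S \<and> P s k \<noteq> 0. P s k) = 1"
    using trans_always_row_sum[OF s] by simp
qed

definition min_pos_entry :: real where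
  "min_pos_entry = Min {Q a b | a b. a \<in> src M \<and> b \<in> src M \<and> 0 < Q a b}"

definition step_bound :: real where
  "step_bound = min_pos_entry * min ps (1 - ps)"

lemma finite_pos_entries: "finite {Q a b | a b. a \<in> src M \<and> b \<in> src M \<and> 0 < Q a b}"
proof -
  have "{Q a b | a b. a \<in> src M \<and> b \<in> src M \<and> 0 < Q a b} \<subseteq> case_prod Q ` (src M \<times> src M)"
    by auto
  then show ?thesis
    by (rule finite_subset) simp
qed

lemma step_bound_pos: "0 < step_bound"
proof -
  have "1 \<in> src M"
    using M_pos by (simp add: src_def)
  then obtain b where "b \<in> src M" "0 < Q 1 b"
    using Q_row_pos by blast
  then have "{Q a b | a b. a \<in> src M \<and> b \<in> src M \<and> 0 < Q a b} \<noteq> {}"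
    using \<open>1 \<in> src M\<close> by blast
  then have "0 < min_pos_entry"
    using Min_in[OF finite_pos_entries] by (auto simp: min_pos_entry_def)
  then show ?thesis
    using ps_pos ps_less_1 by (simp add: step_bound_def)
qed

lemma step_bound_le:
  assumes "a \<in> src M" "b \<in> src M" "0 < Q a b"
  shows "step_bound \<le> Q a b * ps" "step_bound \<le> Q a b * (1 - ps)"
proof -
  have "min_pos_entry \<le> Q a b"
    unfolding min_pos_entry_def using assms by (intro Min_le[OF finite_pos_entries]) blast
  then have "step_bound \<le> Q a b * min ps (1 - ps)"
    unfolding step_bound_def using ps_pos ps_less_1 by (intro mult_right_mono) auto
  moreover have "Q a b * min ps (1 - ps) \<le> Q a b * ps" "Q a b * min ps (1 - ps) \<le> Q a b * (1 - ps)"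
    using assms(3) by (simp_all add: mult_left_mono)
  ultimately show "step_bound \<le> Q a b * ps" "step_bound \<le> Q a b * (1 - ps)"
    by linarith+
qed

abbreviation G :: "(state \<times> state) set" where
  "G \<equiv> transitions_ge step_bound"

lemma delivered_transition:
  assumes "(i, j, d) \<in> S" "x \<in> src M" "0 < Q i x"
  shows "((i, j, d), next_delivered i x) \<in> G"
proof -
  have i: "i \<in> src M"
    using state_space_src[OF assms(1)] by simp
  have "ps \<le> update_prob ps (i, j, d) x (next_delivered i x)"
    using ps_pos ps_less_1 by (auto simp: update_prob_def)
  then have "Q i x * ps \<le> P (i, j, d) (next_delivered i x)"
    unfolding trans_always_factor using assms(3) by (simp add: mult_left_mono)
  then show ?thesis
    unfolding transitions_ge_def
    using step_bound_le(1)[OF i assms(2,3)] assms i next_delivered_in_state_space by simp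
qed

lemma lost_transition:
  assumes "(i, j, d) \<in> S" "i \<noteq> j" "x \<in> src M" "0 < Q i x"
  shows "((i, j, d), next_lost i j d x) \<in> G"
proof -
  have i: "i \<in> src M"
    using state_space_src[OF assms(1)] by simp
  have "1 - ps \<le> update_prob ps (i, j, d) x (next_lost i j d x)"
    using ps_pos ps_less_1 assms(2) by (auto simp: update_prob_def)
  then have "Q i x * (1 - ps) \<le> P (i, j, d) (next_lost i j d x)"
    unfolding trans_always_factor using assms(4) by (simp add: mult_left_mono)
  then show ?thesis
    unfolding transitions_ge_def
    using step_bound_le(2)[OF i assms(3,4)] assms next_lost_in_state_space by simp
qed

definition source_graph :: "(nat \<times> nat) set" where
  "source_graph = {(a, b). a \<in> src M \<and> b \<in> src M \<and> 0 < Q a b}"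

lemma source_graph_connected: "a \<in> src M \<Longrightarrow> b \<in> src M \<Longrightarrow> (a, b) \<in> source_graph\<^sup>*"
  using irreducible nstep_pos_imp_rtrancl[of "src M" Q, OF Q_nonneg]
  unfolding irreducible_on_def source_graph_def by blast

lemma next_delivered_transitions:
  assumes "j \<in> src M" "(x, y) \<in> source_graph"
  shows "(next_delivered j x, next_delivered j y) \<in> G\<^sup>*"
proof -
  have xy: "x \<in> src M" "y \<in> src M" "0 < Q x y"
    using assms(2) by (auto simp: source_graph_def)
  consider "x = j" | "x \<noteq> j" "y = x" | "x \<noteq> j" "y \<noteq> x"
    by blast
  then show ?thesis
  proof cases
    case 1
    then show ?thesis
      using delivered_transition[of j j 0 y] assms(1) xy by (simp add: next_delivered_def)
  next
    case 2
    then show ?thesis by simp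
  next
    case 3
    then have "((x, j, 1), next_lost x j 1 y) \<in> G"
      using lost_transition[of x j 1 y] assms(1) xy by (simp add: unsynced_in_state_space)
    moreover have "next_lost x j 1 y = next_delivered j y"
      using 3 by (simp add: next_lost_def next_delivered_def)
    ultimately show ?thesis
      using 3 by (simp add: next_delivered_def)
  qed
qed

lemma next_delivered_reachable:
  assumes "j \<in> src M" "x \<in> src M" "y \<in> src M"
  shows "(next_delivered j x, next_delivered j y) \<in> G\<^sup>*"
  using source_graph_connected[OF assms(2,3)]
  by (induction rule: rtrancl_induct)
    (blast intro: rtrancl_trans next_delivered_transitions[OF assms(1)])+

lemma reaches_synced_same_source:
  assumes "s \<in> S"
  shows "(s, (fst s, fst s, 0)) \<in> G\<^sup>*"
proof -
  obtain i j d where s: "s = (i, j, d)"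
    by (cases s) auto
  have i: "i \<in> src M"
    using state_space_src[OF assms] s by simp
  obtain x where x: "x \<in> src M" "0 < Q i x"
    using Q_row_pos[OF i] by blast
  have "(s, next_delivered i x) \<in> G"
    using delivered_transition[of i j d x] assms s x by simp
  moreover have "(next_delivered i x, next_delivered i i) \<in> G\<^sup>*"
    using next_delivered_reachable[OF i x(1) i] .
  ultimately show ?thesis
    using s by (simp add: next_delivered_def)
qed

lemma reaches_synced:
  assumes "s \<in> S" "b \<in> src M"
  shows "(s, (b, b, 0)) \<in> G\<^sup>*"
proof -
  define i where "i = fst s"
  have i: "i \<in> src M"
    using state_space_src[OF assms(1)] by (simp add: i_def)
  have "(s, next_delivered i i) \<in> G\<^sup>*"
    using reaches_synced_same_source[OF assms(1)] by (simp add: i_def next_delivered_def)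
  also have "(next_delivered i i, next_delivered i b) \<in> G\<^sup>*"
    using next_delivered_reachable[OF i i assms(2)] .
  also have "(next_delivered i b, (b, b, 0)) \<in> G\<^sup>*"
    using reaches_synced_same_source[OF next_delivered_in_state_space[OF i assms(2)]] by simp
  finally show ?thesis .
qed

lemma reaches_older:
  assumes "i \<noteq> j"
  shows "(i, j, Suc d) \<in> S \<Longrightarrow> ((i, j, 1), (i, j, Suc d)) \<in> G\<^sup>*"
proof (induction d)
  case 0
  then show ?case by simp
next
  case (Suc d)
  have "0 < Q i i" "i \<in> src M" and prev: "(i, j, Suc d) \<in> S"
    using Suc.prems assms by (auto simp: unsynced_in_state_space)
  then have "((i, j, Suc d), next_lost i j (Suc d) i) \<in> G"
    using lost_transition[OF prev assms] by simp
  then show ?case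
    using Suc.IH[OF prev] by (simp add: next_lost_def)
qed

lemma reaches_all:
  assumes "s \<in> S" "t \<in> S"
  shows "(s, t) \<in> G\<^sup>*"
proof -
  obtain i j d where t: "t = (i, j, d)"
    by (cases t) auto
  show ?thesis
  proof (cases "i = j")
    case True
    then show ?thesis
      using reaches_synced[OF assms(1)] assms(2) t by simp
  next
    case False
    have ij: "i \<in> src M" "j \<in> src M" and "1 \<le> d"
      using assms(2) t False by (auto simp: unsynced_in_state_space)
    then obtain d' where d': "d = Suc d'"
      by (cases d) auto
    have "(s, next_delivered j j) \<in> G\<^sup>*"
      using reaches_synced[OF assms(1) ij(2)] by (simp add: next_delivered_def)
    also have "(next_delivered j j, next_delivered j i) \<in> G\<^sup>*"
      using next_delivered_reachable[OF ij(2) ij(2) ij(1)] .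
    also have "(next_delivered j i, t) \<in> G\<^sup>*"
      using reaches_older[OF False] assms(2) False t d' by (simp add: next_delivered_def)
    finally show ?thesis .
  qed
qed

lemma finite_fresh_states: "finite {t \<in> S. snd (snd t) \<le> 1}"
proof (rule finite_subset)
  show "{t \<in> S. snd (snd t) \<le> 1} \<subseteq> src M \<times> src M \<times> {0, 1}"
    using state_space_src by fastforce
qed simp

lemma transition_to_fresh_state: "s \<in> S \<Longrightarrow> \<exists>f\<in>{t \<in> S. snd (snd t) \<le> 1}. (s, f) \<in> G"
proof -
  assume s: "s \<in> S"
  obtain i j d where s_eq: "s = (i, j, d)"
    by (cases s) auto
  have i: "i \<in> src M"
    using state_space_src[OF s] s_eq by simp
  obtain x where x: "x \<in> src M" "0 < Q i x"
    using Q_row_pos[OF i] by blast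
  have "(s, next_delivered i x) \<in> G"
    using delivered_transition[of i j d x] s s_eq x by simp
  moreover have "next_delivered i x \<in> S" "snd (snd (next_delivered i x)) \<le> 1"
    using next_delivered_in_state_space[OF i x(1)] by (auto simp: next_delivered_def)
  ultimately show ?thesis
    by blast
qed

theorem always_transmit_irreducible_and_finite_expected_passage_times:
  "irreducible_on P S \<and> (\<forall>s\<in>S. \<forall>t\<in>S. expected_passage_time P S s t < top)"
  using irreducible_and_finite_expected_passage_times[OF step_bound_pos reaches_all
      finite_fresh_states transition_to_fresh_state] .

end

theorem lemma2:
  fixes M :: nat and Q :: "nat \<Rightarrow> nat \<Rightarrow> real" and ps :: real
  assumes "M \<ge> 1"
    and "stochastic_on Q (src M)"
    and "irreducible_on Q (src M)"
    and "X_ap M Q \<noteq> {}"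
    and "0 < ps" and "ps < 1"
  shows "irreducible_on (trans_always Q ps) (state_space M Q)
       \<and> positive_recurrent_on (trans_always Q ps) (state_space M Q)
       \<and> (\<forall>s\<in>state_space M Q. \<forall>s'\<in>state_space M Q.
            expected_passage_time (trans_always Q ps) (state_space M Q) s s' < top)"
proof -
  interpret remote_estimation M Q ps
    using assms by unfold_locales
  show ?thesis
    using always_transmit_irreducible_and_finite_expected_passage_times
    by (auto simp: positive_recurrent_on_def positive_recurrent_state_def
        intro: hitting_prob_eq_1_if_expected_passage_time_finite)
qed

end
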